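(* If $I$ is a 1-absorbing primary hyperideal of $R$, then $\sqrt{I}$ is a prime hyperideal of $R$.
   Context: Throughout, $R$ is a commutative multiplicative hyperring ($(R,+)$ abelian group, $\circ$ a commutative associative hyperoperation into nonempty subsets, $a\circ(b+c)\subseteq a\circ b+a\circ c$, $a\circ(-b)=(-a)\circ b=-(a\circ b)$), with identity $1$ ($a\in a\circ 1$); $x$ is a unit if $1\in x\circ y$ for some $y$. All hyperideals are $\mathbf{C}$-hyperideals (for any finite product $A=r_1\circ\cdots\circ r_n$, $A\cap I\neq\emptyset\Rightarrow A\subseteq I$). A prime hyperideal is a proper $P$ with $x\circ y\subseteq P\Rightarrow x\in P$ or $y\in P$. $\sqrt I$ is the intersection of the prime hyperideals containing $I$, equal to $\{r: r^n\subseteq I\text{ for some }n\}$. A 1-absorbing primary hyperideal is a proper hyperideal $I$ such that for all nonunit $x,y,z\in R$, $x\circ y\circ z\subseteq I$ implies $x\circ y\subseteq I$ or $z\in\sqrt I$. *)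

theory Defs
  imports Main
begin

text \<open>A multiplicative hyperring: the additive group is the type class ab_group_add on 'a
  (the whole type is R), and the hyperoperation is a function m :: 'a => 'a => 'a set.\<close>

definition setmult :: "('a \<Rightarrow> 'a \<Rightarrow> 'a set) \<Rightarrow> 'a set \<Rightarrow> 'a set \<Rightarrow> 'a set" where
  "setmult m A B = (\<Union>a\<in>A. \<Union>b\<in>B. m a b)"

definition setsum :: "'a::ab_group_add set \<Rightarrow> 'a set \<Rightarrow> 'a set" where
  "setsum A B = {x + y | x y. x \<in> A \<and> y \<in> B}"

text \<open>Finite hyperproduct r1 o r2 o ... o rn (n >= 1); the empty product is never used.\<close>
fun hprod :: "('a \<Rightarrow> 'a \<Rightarrow> 'a set) \<Rightarrow> 'a list \<Rightarrow> 'a set" where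
  "hprod m [] = {}"
| "hprod m [r] = {r}"
| "hprod m (r # s # rs) = setmult m {r} (hprod m (s # rs))"

definition hpow :: "('a \<Rightarrow> 'a \<Rightarrow> 'a set) \<Rightarrow> 'a \<Rightarrow> nat \<Rightarrow> 'a set" where
  "hpow m r n = hprod m (replicate n r)"

definition mult_hyperring :: "('a::ab_group_add \<Rightarrow> 'a \<Rightarrow> 'a set) \<Rightarrow> bool" where
  "mult_hyperring m \<longleftrightarrow>
     (\<forall>a b. m a b \<noteq> {}) \<and>
     (\<forall>a b. m a b = m b a) \<and>
     (\<forall>a b c. setmult m (m a b) {c} = setmult m {a} (m b c)) \<and>
     (\<forall>a b c. m a (b + c) \<subseteq> setsum (m a b) (m a c)) \<and>
     (\<forall>a b. m a (- b) = uminus ` (m a b) \<and> m (- a) b = uminus ` (m a b))"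

definition hyperring_identity :: "('a \<Rightarrow> 'a \<Rightarrow> 'a set) \<Rightarrow> 'a \<Rightarrow> bool" where
  "hyperring_identity m u \<longleftrightarrow> (\<forall>a. a \<in> m a u)"

definition hunit :: "('a \<Rightarrow> 'a \<Rightarrow> 'a set) \<Rightarrow> 'a \<Rightarrow> 'a \<Rightarrow> bool" where
  "hunit m u x \<longleftrightarrow> (\<exists>y. u \<in> m x y)"

definition hyperideal :: "('a::ab_group_add \<Rightarrow> 'a \<Rightarrow> 'a set) \<Rightarrow> 'a set \<Rightarrow> bool" where
  "hyperideal m I \<longleftrightarrow> I \<noteq> {} \<and> (\<forall>x\<in>I. \<forall>y\<in>I. x - y \<in> I) \<and>
     (\<forall>r a. a \<in> I \<longrightarrow> m r a \<subseteq> I)"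

definition C_hyperideal :: "('a::ab_group_add \<Rightarrow> 'a \<Rightarrow> 'a set) \<Rightarrow> 'a set \<Rightarrow> bool" where
  "C_hyperideal m I \<longleftrightarrow> hyperideal m I \<and>
     (\<forall>rs. hprod m rs \<inter> I \<noteq> {} \<longrightarrow> hprod m rs \<subseteq> I)"

definition prime_hyperideal :: "('a::ab_group_add \<Rightarrow> 'a \<Rightarrow> 'a set) \<Rightarrow> 'a set \<Rightarrow> bool" where
  "prime_hyperideal m P \<longleftrightarrow> hyperideal m P \<and> P \<noteq> UNIV \<and>
     (\<forall>x y. m x y \<subseteq> P \<longrightarrow> x \<in> P \<or> y \<in> P)"

text \<open>Radical, via the characterization r^n \<subseteq> I for some n >= 1.\<close>
definition hrad :: "('a \<Rightarrow> 'a \<Rightarrow> 'a set) \<Rightarrow> 'a set \<Rightarrow> 'a set" where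
  "hrad m I = {r. \<exists>n\<ge>1. hpow m r n \<subseteq> I}"

definition one_absorbing_primary :: "('a::ab_group_add \<Rightarrow> 'a \<Rightarrow> 'a set) \<Rightarrow> 'a \<Rightarrow> 'a set \<Rightarrow> bool" where
  "one_absorbing_primary m u I \<longleftrightarrow> hyperideal m I \<and> I \<noteq> UNIV \<and>
     (\<forall>x y z. \<not> hunit m u x \<longrightarrow> \<not> hunit m u y \<longrightarrow> \<not> hunit m u z \<longrightarrow>
        hprod m [x, y, z] \<subseteq> I \<longrightarrow> m x y \<subseteq> I \<or> z \<in> hrad m I)"

end

theory Submission
  imports Defs "HOL-Library.Multiset"
begin

text \<open>
  The radical absorbs products because \<open>c \<in> r \<circ> a\<close> gives \<open>c\<^sup>n \<subseteq> r\<^sup>n \<circ> a\<^sup>n\<close>, and it is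
  closed under sums because every element of \<open>(x + y)\<^sup>a\<^sup>+\<^sup>b\<close> is an additive combination of
  products of \<open>a + b\<close> factors from \<open>{x, y}\<close>, each of which contains \<open>x\<^sup>a\<close> or \<open>y\<^sup>b\<close>.
  It is proper since the identity lies in all its own powers.
  For primality, 1-absorption gives \<open>a \<circ> b \<subseteq> I \<Longrightarrow> a \<in> \<surd>I \<or> b \<in> \<surd>I\<close>: a unit factor can be
  cancelled, and otherwise \<open>a \<circ> a \<circ> b \<subseteq> I\<close> yields \<open>a \<circ> a \<subseteq> I\<close> or \<open>b \<in> \<surd>I\<close>. If \<open>x \<circ> y \<subseteq> \<surd>I\<close>,
  a power of an element of \<open>x \<circ> y\<close> lies in \<open>I\<close>, so \<open>x\<^sup>k \<circ> y\<^sup>k\<close> meets \<open>I\<close> and hence, by the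
  C-property, lies in \<open>I\<close>. Apply this to \<open>a \<in> x\<^sup>k\<close>, \<open>b \<in> y\<^sup>k\<close>; the C-property again passes
  from \<open>a \<in> \<surd>I\<close> to \<open>x \<in> \<surd>I\<close>.
\<close>

lemma setmult_singletons: "setmult m {a} {b} = m a b"
  unfolding setmult_def by simp

lemma setmult_mono: "A \<subseteq> A' \<Longrightarrow> B \<subseteq> B' \<Longrightarrow> setmult m A B \<subseteq> setmult m A' B'"
  unfolding setmult_def by blast

lemma hprod_Cons: "hprod m (z # l) = (if l = [] then {z} else setmult m {z} (hprod m l))"
  by (cases l) auto

lemma hpow_one: "hpow m r (Suc 0) = {r}"
  unfolding hpow_def by simp

lemma hpow_Suc: "n \<ge> 1 \<Longrightarrow> hpow m r (Suc n) = setmult m {r} (hpow m r n)"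
  unfolding hpow_def by (cases n) (auto simp: hprod_Cons)

lemma hpow_two: "hpow m r 2 = m r r"
  by (simp add: numeral_2_eq_2 hpow_Suc hpow_one setmult_singletons)

lemma hpow_identity:
  assumes "hyperring_identity m u" and "n \<ge> 1"
  shows "u \<in> hpow m u n"
  using \<open>n \<ge> 1\<close>
proof (induction n rule: nat_induct_at_least)
  case base
  then show ?case by (simp add: hpow_one)
next
  case (Suc n)
  moreover have "u \<in> m u u"
    using assms(1) unfolding hyperring_identity_def by blast
  ultimately show ?case by (auto simp: hpow_Suc setmult_def)
qed

lemma hyperideal_absorb: "hyperideal m I \<Longrightarrow> a \<in> I \<Longrightarrow> m r a \<subseteq> I"
  unfolding hyperideal_def by blast

lemma hyperideal_zero: "hyperideal m I \<Longrightarrow> 0 \<in> I"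
  unfolding hyperideal_def by (metis all_not_in_conv diff_self)

lemma hyperideal_uminus: "hyperideal m I \<Longrightarrow> a \<in> I \<Longrightarrow> - a \<in> I"
  using hyperideal_zero unfolding hyperideal_def by (metis diff_0)

lemma hyperideal_add: "hyperideal m I \<Longrightarrow> a \<in> I \<Longrightarrow> b \<in> I \<Longrightarrow> a + b \<in> I"
  using hyperideal_uminus unfolding hyperideal_def by (metis diff_minus_eq_add)

lemma setmult_subset_hyperideal: "hyperideal m I \<Longrightarrow> B \<subseteq> I \<Longrightarrow> setmult m A B \<subseteq> I"
  unfolding setmult_def using hyperideal_absorb by blast

lemma hyperideal_UNIV_if_identity_mem:
  assumes "hyperring_identity m u" and "hyperideal m I" and "u \<in> I"
  shows "I = UNIV"
proof -
  have "a \<in> I" for a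
    using assms hyperideal_absorb[of m I u a] unfolding hyperring_identity_def by blast
  then show ?thesis by blast
qed

lemma hrad_proper:
  assumes "hyperring_identity m u" and "hyperideal m I" and "I \<noteq> UNIV"
  shows "hrad m I \<noteq> UNIV"
proof
  assume "hrad m I = UNIV"
  then obtain n where "n \<ge> 1" and "hpow m u n \<subseteq> I"
    unfolding hrad_def by blast
  then have "u \<in> I"
    using hpow_identity[OF assms(1)] by blast
  then show False
    using hyperideal_UNIV_if_identity_mem assms by blast
qed

inductive_set additive_closure :: "'a::ab_group_add set \<Rightarrow> 'a set" for S where
  base: "s \<in> S \<Longrightarrow> s \<in> additive_closure S"
| add: "a \<in> additive_closure S \<Longrightarrow> b \<in> additive_closure S \<Longrightarrow> a + b \<in> additive_closure S"
| uminus: "a \<in> additive_closure S \<Longrightarrow> - a \<in> additive_closure S"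

lemma additive_closure_subset_hyperideal:
  assumes "hyperideal m I" and "S \<subseteq> I"
  shows "additive_closure S \<subseteq> I"
proof
  show "z \<in> I" if "z \<in> additive_closure S" for z
    using that
    by (induction rule: additive_closure.induct)
       (use assms hyperideal_add hyperideal_uminus in blast)+
qed

definition hmonomials :: "('a \<Rightarrow> 'a \<Rightarrow> 'a set) \<Rightarrow> 'a \<Rightarrow> 'a \<Rightarrow> nat \<Rightarrow> 'a set" where
  "hmonomials m x y n = {z. \<exists>ws. length ws = n \<and> set ws \<subseteq> {x, y} \<and> z \<in> hprod m ws}"

lemma mset_eq_replicate_append:
  assumes "count (mset ws) x \<ge> a"
  obtains rest where "mset ws = mset (replicate a x @ rest)"
proof -
  have sub: "replicate_mset a x \<subseteq># mset ws"
    using assms by (simp add: count_le_replicate_mset_subset_eq)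
  obtain rest where "mset rest = mset ws - replicate_mset a x"
    using ex_mset by blast
  with sub show ?thesis
    using that by (metis mset_append mset_replicate subset_mset.add_diff_inverse)
qed

lemma length_le_count_add_count:
  "set ws \<subseteq> {x, y} \<Longrightarrow> length ws \<le> count (mset ws) x + count (mset ws) y"
  by (induction ws) auto

locale hyperring =
  fixes m :: "'a::ab_group_add \<Rightarrow> 'a \<Rightarrow> 'a set"
  assumes mult_hyperring: "mult_hyperring m"
begin

lemma mult_nonempty: "m a b \<noteq> {}"
  using mult_hyperring unfolding mult_hyperring_def by (elim conjE allE)

lemma mult_commute: "m a b = m b a"
  using mult_hyperring unfolding mult_hyperring_def by (elim conjE allE)

lemma mult_assoc: "setmult m (m a b) {c} = setmult m {a} (m b c)"
  using mult_hyperring unfolding mult_hyperring_def by (elim conjE allE)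

lemma mult_distrib: "m a (b + c) \<subseteq> setsum (m a b) (m a c)"
  using mult_hyperring unfolding mult_hyperring_def by (elim conjE allE)

lemma mult_minus_right: "m a (- b) = uminus ` m a b"
  using mult_hyperring unfolding mult_hyperring_def by (elim conjE allE)

lemma mult_minus_left: "m (- a) b = uminus ` m a b"
  using mult_hyperring unfolding mult_hyperring_def by (elim conjE allE)

lemma setmult_commute: "setmult m A B = setmult m B A"
  unfolding setmult_def using mult_commute by blast

lemma setmult_assoc: "setmult m (setmult m A B) C = setmult m A (setmult m B C)"
proof -
  have "setmult m (setmult m A B) C = (\<Union>a\<in>A. \<Union>b\<in>B. \<Union>c\<in>C. setmult m (m a b) {c})"
    unfolding setmult_def by (auto simp: UN_UN_flatten)
  also have "\<dots> = (\<Union>a\<in>A. \<Union>b\<in>B. \<Union>c\<in>C. setmult m {a} (m b c))"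
    by (simp only: mult_assoc)
  also have "\<dots> = setmult m A (setmult m B C)"
    unfolding setmult_def by (auto simp: UN_UN_flatten)
  finally show ?thesis .
qed

lemma setmult_subset_hyperideal_left: "hyperideal m I \<Longrightarrow> A \<subseteq> I \<Longrightarrow> setmult m A B \<subseteq> I"
  using setmult_subset_hyperideal setmult_commute by metis

lemma hprod_append:
  "xs \<noteq> [] \<Longrightarrow> ys \<noteq> [] \<Longrightarrow> hprod m (xs @ ys) = setmult m (hprod m xs) (hprod m ys)"
proof (induction xs)
  case Nil
  then show ?case by simp
next
  case (Cons z xs)
  then show ?case
    by (cases "xs = []") (auto simp: hprod_Cons setmult_assoc)
qed

lemma hprod_append_commute: "hprod m (xs @ ys) = hprod m (ys @ xs)"
  by (cases "xs = []"; cases "ys = []") (auto simp: hprod_append setmult_commute)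

lemma hprod_mset_eq: "mset xs = mset ys \<Longrightarrow> hprod m xs = hprod m ys"
proof (induction xs arbitrary: ys)
  case Nil
  then show ?case by simp
next
  case (Cons z xs)
  then have "z \<in> set ys"
    by (metis list.set_intros(1) set_mset_mset)
  then obtain p q where ys: "ys = p @ z # q"
    by (meson split_list)
  then have "hprod m ys = hprod m (z # (q @ p))"
    using hprod_append_commute by (metis append_Cons append_Nil)
  moreover have "mset xs = mset (q @ p)"
    using Cons.prems ys by (simp add: union_commute)
  ultimately show ?case
    using Cons.IH by (metis hprod_Cons mset_zero_iff)
qed

lemma hprod_nonempty: "xs \<noteq> [] \<Longrightarrow> hprod m xs \<noteq> {}"
proof (induction xs)
  case (Cons z xs)
  then show ?case
    using mult_nonempty by (cases "xs = []") (auto simp: hprod_Cons setmult_def)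
qed simp

lemma hpow_nonempty: "n \<ge> 1 \<Longrightarrow> hpow m r n \<noteq> {}"
  unfolding hpow_def using hprod_nonempty by simp

lemma hpow_add: "a \<ge> 1 \<Longrightarrow> b \<ge> 1 \<Longrightarrow> hpow m r (a + b) = setmult m (hpow m r a) (hpow m r b)"
  unfolding hpow_def by (simp add: replicate_add hprod_append)

lemma hpow_hpow_subset:
  assumes "a \<in> hpow m x k" and "k \<ge> 1" and "j \<ge> 1"
  shows "hpow m a j \<subseteq> hpow m x (k * j)"
  using \<open>j \<ge> 1\<close>
proof (induction j rule: nat_induct_at_least)
  case base
  then show ?case using assms(1) by (simp add: hpow_one)
next
  case (Suc j)
  have "hpow m a (Suc j) = setmult m {a} (hpow m a j)"
    using Suc by (simp add: hpow_Suc)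
  also have "\<dots> \<subseteq> setmult m (hpow m x k) (hpow m x (k * j))"
    using Suc assms(1) by (intro setmult_mono) auto
  also have "\<dots> = hpow m x (k * Suc j)"
    using hpow_add[of k "k * j"] assms(2) Suc by simp
  finally show ?case .
qed

lemma hpow_mult_subset:
  assumes "c \<in> m x y" and "k \<ge> 1"
  shows "hpow m c k \<subseteq> setmult m (hpow m x k) (hpow m y k)"
proof -
  have "hpow m c k \<subseteq> hprod m (replicate k x @ replicate k y)"
    using \<open>k \<ge> 1\<close>
  proof (induction k rule: nat_induct_at_least)
    case base
    then show ?case using assms(1) by (simp add: hpow_one setmult_singletons)
  next
    case (Suc k)
    have "hpow m c (Suc k) = setmult m {c} (hpow m c k)"
      using Suc by (simp add: hpow_Suc)
    also have "\<dots> \<subseteq> setmult m (hprod m [x, y]) (hprod m (replicate k x @ replicate k y))"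
      using Suc assms(1) by (intro setmult_mono) (auto simp: setmult_singletons)
    also have "\<dots> = hprod m ([x, y] @ replicate k x @ replicate k y)"
      using Suc by (subst hprod_append) auto
    also have "\<dots> = hprod m (replicate (Suc k) x @ replicate (Suc k) y)"
      by (rule hprod_mset_eq) simp
    finally show ?case .
  qed
  also have "\<dots> = setmult m (hpow m x k) (hpow m y k)"
    using \<open>k \<ge> 1\<close> by (simp add: hprod_append hpow_def)
  finally show ?thesis .
qed

lemma hpow_uminus_subset:
  assumes "n \<ge> 1"
  shows "hpow m (- q) n \<subseteq> hpow m q n \<union> uminus ` hpow m q n"
  using assms
proof (induction n rule: nat_induct_at_least)
  case base
  then show ?case by (simp add: hpow_one)
next
  case (Suc n)
  have step: "m (- q) w \<subseteq> hpow m q (Suc n) \<union> uminus ` hpow m q (Suc n)"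
    if "w \<in> hpow m q n \<union> uminus ` hpow m q n" for w
  proof -
    have "m (- q) (- v) = m q v" for v
      by (simp add: mult_minus_left mult_minus_right image_image)
    then show ?thesis
      using that Suc.hyps by (auto simp: hpow_Suc setmult_def mult_minus_left)
  qed
  have "hpow m (- q) (Suc n) = (\<Union>w\<in>hpow m (- q) n. m (- q) w)"
    using Suc.hyps by (simp add: hpow_Suc setmult_def)
  then show ?case
    using step Suc.IH by blast
qed

lemma mult_additive_closure_hmonomials:
  assumes "n \<ge> 1" and "v \<in> {x, y}" and "w \<in> additive_closure (hmonomials m x y n)"
  shows "m v w \<subseteq> additive_closure (hmonomials m x y (Suc n))"
  using assms(3)
proof (induction rule: additive_closure.induct)
  case (base s)
  then obtain ws where ws: "length ws = n" "set ws \<subseteq> {x, y}" "s \<in> hprod m ws"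
    unfolding hmonomials_def by blast
  then have "m v s \<subseteq> hprod m (v # ws)"
    using assms(1) by (auto simp: hprod_Cons setmult_def)
  moreover have "length (v # ws) = Suc n" "set (v # ws) \<subseteq> {x, y}"
    using ws assms(2) by auto
  ultimately have "m v s \<subseteq> hmonomials m x y (Suc n)"
    unfolding hmonomials_def by blast
  then show ?case
    by (auto intro: additive_closure.base)
next
  case (add a b)
  show ?case
  proof
    fix z
    assume "z \<in> m v (a + b)"
    then obtain p q where "z = p + q" "p \<in> m v a" "q \<in> m v b"
      using mult_distrib unfolding setsum_def by blast
    with add.IH show "z \<in> additive_closure (hmonomials m x y (Suc n))"
      by (auto intro: additive_closure.add)
  qed
next
  case (uminus a)
  then show ?case
    by (auto simp: mult_minus_right intro: additive_closure.uminus)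
qed

lemma hpow_add_subset_additive_closure:
  "n \<ge> 1 \<Longrightarrow> hpow m (x + y) n \<subseteq> additive_closure (hmonomials m x y n)"
proof (induction n rule: nat_induct_at_least)
  case base
  have "v \<in> additive_closure (hmonomials m x y 1)" if "v \<in> {x, y}" for v
    using that unfolding hmonomials_def by (auto intro!: additive_closure.base exI[of _ "[v]"])
  then show ?case
    by (auto simp: hpow_one intro: additive_closure.add)
next
  case (Suc n)
  show ?case
  proof
    fix z
    assume "z \<in> hpow m (x + y) (Suc n)"
    then obtain w where "w \<in> hpow m (x + y) n" and "z \<in> m w (x + y)"
      using Suc.hyps mult_commute by (auto simp: hpow_Suc setmult_def)
    then have w: "w \<in> additive_closure (hmonomials m x y n)"
      and "z \<in> setsum (m w x) (m w y)"
      using Suc.IH mult_distrib by blast+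
    then obtain p q where "z = p + q" "p \<in> m x w" "q \<in> m y w"
      unfolding setsum_def using mult_commute by blast
    with w show "z \<in> additive_closure (hmonomials m x y (Suc n))"
      using mult_additive_closure_hmonomials[OF Suc.hyps] by (blast intro: additive_closure.add)
  qed
qed

lemma hprod_subset_hyperideal_if_count:
  assumes "hyperideal m I" and "a \<ge> 1" and "hpow m x a \<subseteq> I" and "count (mset ws) x \<ge> a"
  shows "hprod m ws \<subseteq> I"
proof -
  obtain rest where "mset ws = mset (replicate a x @ rest)"
    using mset_eq_replicate_append[OF assms(4)] .
  then have ws: "hprod m ws = hprod m (replicate a x @ rest)"
    by (rule hprod_mset_eq)
  show ?thesis
  proof (cases "rest = []")
    case True
    then show ?thesis using ws assms(3) by (simp add: hpow_def)
  next
    case False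
    then have "hprod m ws = setmult m (hpow m x a) (hprod m rest)"
      using ws assms(2) by (simp add: hprod_append hpow_def)
    then show ?thesis
      using setmult_subset_hyperideal_left[OF assms(1,3)] by simp
  qed
qed

lemma hpow_add_subset_hyperideal:
  assumes I: "hyperideal m I"
    and "a \<ge> 1" and "hpow m x a \<subseteq> I"
    and "b \<ge> 1" and "hpow m y b \<subseteq> I"
  shows "hpow m (x + y) (a + b) \<subseteq> I"
proof -
  have "hprod m ws \<subseteq> I" if "length ws = a + b" and "set ws \<subseteq> {x, y}" for ws
  proof -
    have "count (mset ws) x \<ge> a \<or> count (mset ws) y \<ge> b"
      using length_le_count_add_count[OF that(2)] that(1) by linarith
    then show ?thesis
      using hprod_subset_hyperideal_if_count[OF I] assms by blast
  qed
  then have "hmonomials m x y (a + b) \<subseteq> I"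
    unfolding hmonomials_def by blast
  then have "additive_closure (hmonomials m x y (a + b)) \<subseteq> I"
    by (rule additive_closure_subset_hyperideal[OF I])
  then show ?thesis
    using hpow_add_subset_additive_closure[of "a + b" x y] assms(2) by simp
qed

lemma hyperideal_hrad:
  assumes I: "hyperideal m I"
  shows "hyperideal m (hrad m I)"
  unfolding hyperideal_def
proof (intro conjI allI impI ballI)
  show "hrad m I \<noteq> {}"
    using hyperideal_zero[OF I] unfolding hrad_def by (auto simp: hpow_one intro!: exI[of _ 1])
next
  fix p q
  assume "p \<in> hrad m I" and "q \<in> hrad m I"
  then obtain a b where a: "a \<ge> 1" "hpow m p a \<subseteq> I" and b: "b \<ge> 1" "hpow m q b \<subseteq> I"
    unfolding hrad_def by blast
  have "hpow m (- q) b \<subseteq> I"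
    using hpow_uminus_subset[OF b(1)] b(2) hyperideal_uminus[OF I] by blast
  then have "hpow m (p + - q) (a + b) \<subseteq> I"
    using hpow_add_subset_hyperideal[OF I a] b(1) by blast
  then show "p - q \<in> hrad m I"
    unfolding hrad_def using a(1) by (auto intro!: exI[of _ "a + b"])
next
  fix r a
  assume "a \<in> hrad m I"
  then obtain n where n: "n \<ge> 1" "hpow m a n \<subseteq> I"
    unfolding hrad_def by blast
  have "hpow m c n \<subseteq> I" if "c \<in> m r a" for c
    using hpow_mult_subset[OF that n(1)] setmult_subset_hyperideal[OF I n(2)] by blast
  then show "m r a \<subseteq> hrad m I"
    unfolding hrad_def using n(1) by blast
qed

lemma mem_hrad_if_hpow_meets_hrad:
  assumes "C_hyperideal m I" and "a \<in> hpow m x k" and "k \<ge> 1" and "a \<in> hrad m I"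
  shows "x \<in> hrad m I"
proof -
  obtain j where j: "j \<ge> 1" "hpow m a j \<subseteq> I"
    using assms(4) unfolding hrad_def by blast
  then have "hpow m x (k * j) \<inter> I \<noteq> {}"
    using hpow_hpow_subset[OF assms(2,3) j(1)] hpow_nonempty by blast
  then have "hpow m x (k * j) \<subseteq> I"
    using assms(1) unfolding C_hyperideal_def hpow_def by blast
  then show ?thesis
    unfolding hrad_def using assms(3) j(1) by (auto intro!: exI[of _ "k * j"])
qed

lemma mem_hrad_if_mult_subset_hrad:
  assumes C: "C_hyperideal m I"
    and elementwise: "\<And>a b. m a b \<subseteq> I \<Longrightarrow> a \<in> hrad m I \<or> b \<in> hrad m I"
    and "m x y \<subseteq> hrad m I"
  shows "x \<in> hrad m I \<or> y \<in> hrad m I"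
proof -
  obtain c where "c \<in> m x y"
    using mult_nonempty by blast
  then obtain k where k: "k \<ge> 1" "hpow m c k \<subseteq> I"
      and c: "hpow m c k \<subseteq> setmult m (hpow m x k) (hpow m y k)"
    using assms(3) hpow_mult_subset unfolding hrad_def by blast
  have "setmult m (hpow m x k) (hpow m y k) = hprod m (replicate k x @ replicate k y)"
    using k(1) by (simp add: hprod_append hpow_def)
  moreover have "setmult m (hpow m x k) (hpow m y k) \<inter> I \<noteq> {}"
    using k c hpow_nonempty by blast
  ultimately have xy: "setmult m (hpow m x k) (hpow m y k) \<subseteq> I"
    using C unfolding C_hyperideal_def by metis
  obtain a b where a: "a \<in> hpow m x k" and b: "b \<in> hpow m y k"
    using hpow_nonempty[OF k(1)] by blast
  then have "m a b \<subseteq> I"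
    using xy unfolding setmult_def by blast
  then show ?thesis
    using elementwise mem_hrad_if_hpow_meets_hrad[OF C] a b k(1) by blast
qed

lemma mem_if_unit_mult_subset:
  assumes "hyperring_identity m u" and "hyperideal m I" and "hunit m u a" and "m a b \<subseteq> I"
  shows "b \<in> I"
proof -
  obtain a' where "u \<in> m a a'"
    using assms(3) unfolding hunit_def by blast
  have "b \<in> m b u"
    using assms(1) unfolding hyperring_identity_def by blast
  also have "m b u \<subseteq> setmult m {b} (m a a')"
    using \<open>u \<in> m a a'\<close> unfolding setmult_def by blast
  also have "setmult m {b} (m a a') = setmult m (m a b) {a'}"
    using mult_assoc[of b a a'] mult_commute[of b a] by simp
  also have "\<dots> \<subseteq> I"
    using setmult_subset_hyperideal_left[OF assms(2,4)] .
  finally show ?thesis .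
qed

lemma one_absorbing_primary_mem_hrad_if_mult_subset:
  assumes u: "hyperring_identity m u" and I: "one_absorbing_primary m u I" and ab: "m a b \<subseteq> I"
  shows "a \<in> hrad m I \<or> b \<in> hrad m I"
proof -
  have hI: "hyperideal m I"
    and absorbing: "\<And>x y z. \<not> hunit m u x \<Longrightarrow> \<not> hunit m u y \<Longrightarrow> \<not> hunit m u z \<Longrightarrow>
      hprod m [x, y, z] \<subseteq> I \<Longrightarrow> m x y \<subseteq> I \<or> z \<in> hrad m I"
    using I unfolding one_absorbing_primary_def by blast+
  have in_hrad: "c \<in> hrad m I" if "c \<in> I" for c
    using that unfolding hrad_def by (auto simp: hpow_one intro!: exI[of _ 1])
  consider "hunit m u a" | "hunit m u b" | "\<not> hunit m u a" "\<not> hunit m u b"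
    by blast
  then show ?thesis
  proof cases
    case 1
    then show ?thesis
      using mem_if_unit_mult_subset[OF u hI _ ab] in_hrad by blast
  next
    case 2
    moreover have "m b a \<subseteq> I"
      using ab by (simp only: mult_commute[of b a])
    ultimately show ?thesis
      using mem_if_unit_mult_subset[OF u hI] in_hrad by blast
  next
    case 3
    have "hprod m [a, a, b] \<subseteq> I"
      using setmult_subset_hyperideal[OF hI ab] by (simp add: setmult_singletons)
    then have "hpow m a 2 \<subseteq> I \<or> b \<in> hrad m I"
      using absorbing 3 hpow_two by metis
    moreover have "hpow m a 2 \<subseteq> I \<Longrightarrow> a \<in> hrad m I"
      unfolding hrad_def by (intro CollectI exI[of _ 2]) simp
    ultimately show ?thesis
      by blast
  qed
qed

end

theorem mainTheorem5:
  fixes m :: "'a::ab_group_add \<Rightarrow> 'a \<Rightarrow> 'a set" and u :: 'a and I :: "'a set"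
  assumes "mult_hyperring m"
    and "hyperring_identity m u"
    and "\<forall>J. hyperideal m J \<longrightarrow> C_hyperideal m J"
    and "one_absorbing_primary m u I"
  shows "prime_hyperideal m (hrad m I)"
proof -
  interpret hyperring m
    using assms(1) by (rule hyperring.intro)
  have I: "hyperideal m I" "I \<noteq> UNIV"
    using assms(4) unfolding one_absorbing_primary_def by blast+
  have C: "C_hyperideal m I"
    using assms(3) I(1) by blast
  have "m x y \<subseteq> hrad m I \<Longrightarrow> x \<in> hrad m I \<or> y \<in> hrad m I" for x y
    using mem_hrad_if_mult_subset_hrad[OF C one_absorbing_primary_mem_hrad_if_mult_subset[OF assms(2,4)]] .
  with hyperideal_hrad[OF I(1)] hrad_proper[OF assms(2) I] show ?thesis
    unfolding prime_hyperideal_def by blast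
qed

end
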